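(* Let $b,\beta,\gamma$ be real with $\beta>0$ and $0<b+1<\gamma<b+1+\beta$, and for $0\le v<1$ let $$K(v)=\frac{F(b,\beta;\gamma;v)}{F(b+1,\beta;\gamma;v)}.$$ Then: (i) $K(0)=1$; (ii) $\lim_{v\to1}K(v)=0$; (iii) if $b\ge0$, or if $-1<b<0$ and $\gamma\ge\beta$, then $K$ is monotone decreasing; (iv) if $-1<b<0$ and $\gamma<\beta$, then the minimum of $K$ is a negative value and $K(v)$ approaches $0$ from below as $v\to1$; moreover $\inf_{0\le v<1}K(v)\ge b/(b+1)$.
   Context: $F(\alpha,\beta;\gamma;z)=1+\sum_{i\ge1}\frac{(\alpha)_i(\beta)_i}{(\gamma)_i}\frac{z^i}{i!}$ is the Gauss hypergeometric function, with $(\alpha)_i=\alpha(\alpha+1)\cdots(\alpha+i-1)$, for $|z|<1$. *)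

theory Defs
  imports "HOL-Analysis.Analysis"
begin

definition hyp2F1 :: "real \<Rightarrow> real \<Rightarrow> real \<Rightarrow> real \<Rightarrow> real" where
  "hyp2F1 a b c z =
     (\<Sum>n. pochhammer a n * pochhammer b n / pochhammer c n * z ^ n / fact n)"

end

theory Submission
  imports Defs
begin

text \<open>
  Write F(b+1,\<beta>;\<gamma>;v) = \<Sum> c_n v^n with c_n > 0. Since (b)_n/(b+1)_n = b/(b+n) for n \<ge> 1,
  the numerator is \<Sum> c_n w_n v^n with weights w_0 = 1, w_n = b/(b+n) tending to 0.
  Because \<gamma> < b+1+\<beta>, Gauss's test shows that \<Sum> c_n diverges, so the denominator tends
  to \<infinity> at v = 1 and the weighted mean K(v) inherits the limit 0 of the weights.
  For b \<ge> 0 the weights decrease, and the Biernacki--Krzyz inequality makes K decreasing.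
  For b < 0 the coefficients of the numerator are (b)_n/n! \<cdot> (\<beta>)_n/(\<gamma>)_n with (b)_n \<le> 0 for
  n \<ge> 1; comparing (\<beta>)_n/(\<gamma>)_n with 1, resp. with \<beta>/\<gamma>, against the binomial series of
  (1-v)^(-b) shows that the numerator is nonnegative and decreasing when \<beta> \<le> \<gamma>, and
  eventually below 1 - \<beta>/\<gamma> < 0 when \<gamma> < \<beta>. The bound b/(b+1) is the least weight.
\<close>

definition hyp2F1_coeff :: "real \<Rightarrow> real \<Rightarrow> real \<Rightarrow> nat \<Rightarrow> real" where
  "hyp2F1_coeff a b c n = pochhammer a n * pochhammer b n / pochhammer c n / fact n"

definition pochhammer_quot :: "real \<Rightarrow> real \<Rightarrow> nat \<Rightarrow> real" where
  "pochhammer_quot x y n = pochhammer x n / pochhammer y n"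

lemma hyp2F1_powser: "hyp2F1 a b c z = (\<Sum>n. hyp2F1_coeff a b c n * z ^ n)"
  unfolding hyp2F1_def hyp2F1_coeff_def by (simp add: field_simps)

lemma hyp2F1_coeff_0 [simp]: "hyp2F1_coeff a b c 0 = 1"
  by (simp add: hyp2F1_coeff_def)

lemma hyp2F1_at_0 [simp]: "hyp2F1 a b c 0 = 1"
  by (simp add: hyp2F1_powser powser_zero)

lemma hyp2F1_coeff_pos: "0 < a \<Longrightarrow> 0 < b \<Longrightarrow> 0 < c \<Longrightarrow> 0 < hyp2F1_coeff a b c n"
  unfolding hyp2F1_coeff_def by (simp add: pochhammer_pos)

lemma hyp2F1_coeff_Suc:
  assumes "0 < c"
  shows "hyp2F1_coeff a b c (Suc n) =
           hyp2F1_coeff a b c n * ((a + n) * (b + n) / ((c + n) * (n + 1)))"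
proof -
  have "0 < pochhammer c n" "0 < c + n" using assms by (simp_all add: pochhammer_pos)
  then show ?thesis unfolding hyp2F1_coeff_def by (simp add: pochhammer_rec' field_simps)
qed

lemma hyp2F1_coeff_eq_binomial_quot:
  "hyp2F1_coeff a b c n = pochhammer a n / fact n * pochhammer_quot b c n"
  unfolding hyp2F1_coeff_def pochhammer_quot_def by simp

lemma hyp2F1_coeff_lower:
  assumes "0 < a + 1" "0 < b" "0 < c"
  shows "hyp2F1_coeff a b c n = hyp2F1_coeff (a + 1) b c n * pochhammer_quot a (a + 1) n"
  using assms pochhammer_pos[of "a + 1" n]
  unfolding hyp2F1_coeff_def pochhammer_quot_def by (simp add: field_simps)

lemma pochhammer_quot_0 [simp]: "pochhammer_quot x y 0 = 1"
  by (simp add: pochhammer_quot_def)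

lemma pochhammer_quot_Suc:
  assumes "0 < y"
  shows "pochhammer_quot x y (Suc n) = pochhammer_quot x y n * ((x + n) / (y + n))"
proof -
  have "0 < pochhammer y n" "0 < y + n" using assms by (simp_all add: pochhammer_pos)
  then show ?thesis unfolding pochhammer_quot_def by (simp add: pochhammer_rec' field_simps)
qed

lemma pochhammer_quot_nonneg: "0 \<le> x \<Longrightarrow> 0 < y \<Longrightarrow> 0 \<le> pochhammer_quot x y n"
  by (induction n) (simp_all add: pochhammer_quot_Suc)

lemma pochhammer_quot_le_1:
  assumes "0 \<le> x" "x \<le> y" "0 < y"
  shows "pochhammer_quot x y n \<le> 1"
proof (induction n)
  case (Suc n)
  have "pochhammer_quot x y n * ((x + n) / (y + n)) \<le> 1 * 1"
    using Suc assms pochhammer_quot_nonneg[of x y n] by (intro mult_mono) auto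
  then show ?case using assms by (simp add: pochhammer_quot_Suc)
qed simp

lemma pochhammer_quot_ge:
  assumes "0 < y" "y \<le> x" "1 \<le> n"
  shows "x / y \<le> pochhammer_quot x y n"
  using assms(3)
proof (induction n rule: dec_induct)
  case base
  then show ?case using assms by (simp add: pochhammer_quot_Suc[of y x 0, simplified])
next
  case (step n)
  have "pochhammer_quot x y n * 1 \<le> pochhammer_quot x y n * ((x + n) / (y + n))"
    using assms pochhammer_quot_nonneg[of x y n] by (intro mult_left_mono) auto
  then show ?case using assms step by (simp add: pochhammer_quot_Suc)
qed

lemma pochhammer_quot_succ:
  assumes "0 < x + 1"
  shows "pochhammer_quot x (x + 1) n = (if n = 0 then 1 else x / (x + n))"
proof (cases n)
  case (Suc m)
  have "0 < pochhammer (x + 1) m" using assms by (simp add: pochhammer_pos)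
  moreover have "pochhammer_quot x (x + 1) n =
      (x * pochhammer (x + 1) m) / ((x + 1 + m) * pochhammer (x + 1) m)"
    unfolding Suc pochhammer_quot_def pochhammer_rec[of x m] pochhammer_rec'[of "x + 1" m] ..
  ultimately show ?thesis using Suc by (simp add: add_ac)
qed simp

lemma pochhammer_nonpos:
  fixes b :: real
  assumes "0 < b + 1" "b \<le> 0" "1 \<le> n"
  shows "pochhammer b n \<le> 0"
proof -
  obtain m where n: "n = Suc m" using assms(3) by (cases n) auto
  have "0 < pochhammer (b + 1) m" using assms by (intro pochhammer_pos) auto
  then show ?thesis unfolding n pochhammer_rec using assms by (simp add: mult_nonpos_nonneg)
qed

lemma shifted_quot_tendsto_1: "(\<lambda>n. (a + real n) / (b + real n)) \<longlonglongrightarrow> 1"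
proof -
  have b_n: "filterlim (\<lambda>n. b + real n) at_top sequentially"
    by (rule filterlim_tendsto_add_at_top[OF tendsto_const filterlim_real_sequentially])
  then have "(\<lambda>n. 1 + (a - b) / (b + real n)) \<longlonglongrightarrow> 1 + 0"
    by (intro tendsto_add tendsto_const real_tendsto_divide_at_top[OF tendsto_const])
  moreover have "\<forall>\<^sub>F n in sequentially. 1 + (a - b) / (b + real n) = (a + real n) / (b + real n)"
    using b_n[unfolded filterlim_at_top_dense, rule_format, of 0]
    by eventually_elim (simp add: field_simps)
  ultimately show ?thesis by (simp add: tendsto_cong)
qed

lemma summable_hyp2F1_powser:
  assumes "0 < a" "0 < b" "0 < c" "\<bar>z\<bar> < 1"
  shows "summable (\<lambda>n. hyp2F1_coeff a b c n * z ^ n)"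
proof -
  have "norm (hyp2F1_coeff a b c n) / norm (hyp2F1_coeff a b c (Suc n)) =
          (c + n) / (a + n) * ((1 + n) / (b + n))" for n
  proof -
    have "0 < hyp2F1_coeff a b c n" "0 < a + n" "0 < b + n" "0 < c + n"
      using assms hyp2F1_coeff_pos by auto
    with assms show ?thesis by (simp add: hyp2F1_coeff_Suc abs_mult)
  qed
  moreover have "(\<lambda>n. (c + n) / (a + n) * ((1 + n) / (b + n))) \<longlonglongrightarrow> 1 * 1"
    by (intro tendsto_mult shifted_quot_tendsto_1)
  ultimately have "conv_radius (hyp2F1_coeff a b c) = 1"
    by (intro conv_radius_ratio_limit_nonzero[of _ 1]) simp_all
  then show ?thesis using assms by (intro summable_in_conv_radius) simp
qed

lemma gauss_cubic_eventually_less: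
  fixes a b c :: real
  assumes "c < a + b"
  shows "\<forall>\<^sub>F n in sequentially.
           (c + real n) * (real n + 1)^2 < (real n + 2) * (a + real n) * (b + real n)"
proof -
  define E F where "E = 2 * a + 2 * b + a * b - 2 * c - 1" and "F = 2 * a * b - c"
  have "(\<lambda>n. (a + b - c) + E / real n + F * (inverse (real n))^2) \<longlonglongrightarrow> (a + b - c) + 0 + F * 0^2"
    by (intro tendsto_intros lim_inverse_n)
  then have "\<forall>\<^sub>F n in sequentially. 0 < (a + b - c) + E / real n + F * (inverse (real n))^2"
    using assms by (intro order_tendstoD) auto
  then show ?thesis
    using eventually_gt_at_top[of "0::nat"]
  proof eventually_elim
    case (elim n)
    have "(real n + 2) * (a + n) * (b + n) - (c + n) * (real n + 1)^2 =
            (real n)^2 * ((a + b - c) + E / real n + F * (inverse (real n))^2)"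
      using elim(2) unfolding E_def F_def by (simp add: field_simps power2_eq_square)
    moreover have "0 < (real n)^2 * ((a + b - c) + E / real n + F * (inverse (real n))^2)"
      using elim by simp
    ultimately show ?case by linarith
  qed
qed

lemma not_summable_hyp2F1_coeff:
  assumes "0 < a" "0 < b" "0 < c" "c < a + b"
  shows "\<not> summable (hyp2F1_coeff a b c)"
proof
  assume summable: "summable (hyp2F1_coeff a b c)"
  let ?h = "hyp2F1_coeff a b c"
  have h_pos: "0 < ?h n" for n using assms by (simp add: hyp2F1_coeff_pos)
  obtain N where gauss: "\<And>n. N \<le> n \<Longrightarrow>
      (c + real n) * (real n + 1)^2 < (real n + 2) * (a + real n) * (b + real n)"
    using gauss_cubic_eventually_less[OF assms(4)] by (auto simp: eventually_sequentially)
  txt \<open>(n+1) c_n eventually increases, so c_n dominates a multiple of the harmonic series.\<close>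
  have weighted_mono: "(real n + 1) * ?h n \<le> (real n + 2) * ?h (Suc n)" if "N \<le> n" for n
  proof -
    have pos: "0 < (c + n) * (real n + 1)" using assms by simp
    have "(real n + 1) * ?h n * ((c + n) * (real n + 1)) = ?h n * ((c + n) * (real n + 1)^2)"
      by (simp add: power2_eq_square)
    also have "\<dots> \<le> ?h n * ((real n + 2) * (a + n) * (b + n))"
      using gauss[OF that] h_pos[of n] by (intro mult_left_mono) auto
    also have "\<dots> = (real n + 2) * ?h (Suc n) * ((c + n) * (real n + 1))"
      using pos assms(3) by (simp add: hyp2F1_coeff_Suc field_simps)
    finally show ?thesis using pos by (simp add: mult_le_cancel_right)
  qed
  have lower: "(real N + 1) * ?h N \<le> (real n + 1) * ?h n" if "N \<le> n" for n
    using that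
  proof (induction n rule: dec_induct)
    case (step m)
    with weighted_mono[of m] show ?case by (simp add: add_ac)
  qed simp
  define \<delta> where "\<delta> = (real N + 1) * ?h N"
  have "0 < \<delta>" unfolding \<delta>_def using h_pos by simp
  have "summable (\<lambda>n. inverse (real (Suc n)))"
  proof (rule summable_comparison_test')
    show "summable (\<lambda>n. ?h n / \<delta>)" using summable by (rule summable_divide)
    show "norm (inverse (real (Suc n))) \<le> ?h n / \<delta>" if "N \<le> n" for n
      using lower[OF that] \<open>0 < \<delta>\<close> unfolding \<delta>_def by (simp add: field_simps)
  qed
  then show False
    using not_summable_harmonic[where 'a=real] summable_Suc_iff[where f="\<lambda>n. inverse (real n)"] by simp
qed

lemma powser_tendsto_at_top_at_left_1:
  fixes c :: "nat \<Rightarrow> real"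
  assumes nonneg: "\<And>n. 0 \<le> c n" and diverges: "\<not> summable c"
    and summable: "\<And>v. 0 \<le> v \<Longrightarrow> v < 1 \<Longrightarrow> summable (\<lambda>n. c n * v ^ n)"
  shows "filterlim (\<lambda>v. \<Sum>n. c n * v ^ n) at_top (at_left 1)"
proof (rule filterlim_at_top_ge[where c=0, THEN iffD2], intro allI impI)
  fix M :: real
  obtain N where N: "M < sum c {..<N}"
    using diverges nonneg summableI_nonneg_bounded[of c M] by (meson not_le)
  have "((\<lambda>v. \<Sum>n<N. c n * v ^ n) \<longlongrightarrow> (\<Sum>n<N. c n * 1 ^ n)) (at_left 1)"
    by (intro tendsto_intros)
  then have "\<forall>\<^sub>F v in at_left 1. M < (\<Sum>n<N. c n * v ^ n)"
    using N by (intro order_tendstoD) auto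
  moreover have "\<forall>\<^sub>F v in at_left (1::real). v \<in> {0<..<1}"
    by (rule eventually_at_left_real) simp
  ultimately show "\<forall>\<^sub>F v in at_left 1. M \<le> (\<Sum>n. c n * v ^ n)"
  proof eventually_elim
    case (elim v)
    then have "(\<Sum>n<N. c n * v ^ n) \<le> (\<Sum>n. c n * v ^ n)"
      using nonneg summable[of v] by (intro sum_le_suminf) auto
    with elim show ?case by simp
  qed
qed

lemma abs_powser_weighted_le:
  fixes c r :: "nat \<Rightarrow> real"
  assumes nonneg: "\<And>n. 0 \<le> c n" and bounded: "\<And>n. \<bar>r n\<bar> \<le> B"
    and tail: "\<And>n. N \<le> n \<Longrightarrow> \<bar>r n\<bar> \<le> \<epsilon>"
    and v: "0 \<le> v" "v \<le> 1" and summable: "summable (\<lambda>n. c n * v ^ n)"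
  shows "\<bar>\<Sum>n. c n * r n * v ^ n\<bar> \<le> (\<Sum>n<N. c n * \<bar>r n\<bar>) + \<epsilon> * (\<Sum>n. c n * v ^ n)"
proof -
  have abs_eq: "\<bar>c n * r n * v ^ n\<bar> = \<bar>r n\<bar> * (c n * v ^ n)" for n
    using nonneg[of n] v by (simp add: abs_mult)
  have abs_summable: "summable (\<lambda>n. \<bar>c n * r n * v ^ n\<bar>)"
  proof (rule summable_comparison_test')
    show "summable (\<lambda>n. B * (c n * v ^ n))" using summable by (rule summable_mult)
    show "norm \<bar>c n * r n * v ^ n\<bar> \<le> B * (c n * v ^ n)" for n
      unfolding abs_eq using bounded[of n] nonneg[of n] v by (simp add: mult_right_mono)
  qed
  have head: "(\<lambda>n. if n \<in> {..<N} then c n * \<bar>r n\<bar> else 0) sums (\<Sum>n<N. c n * \<bar>r n\<bar>)"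
    by (rule sums_If_finite_set) simp
  have "0 \<le> \<epsilon>" using tail[of N] by simp
  have "\<bar>\<Sum>n. c n * r n * v ^ n\<bar> \<le> (\<Sum>n. \<bar>c n * r n * v ^ n\<bar>)"
    using abs_summable by (rule summable_rabs)
  also have "\<dots> \<le> (\<Sum>n. (if n \<in> {..<N} then c n * \<bar>r n\<bar> else 0) + \<epsilon> * (c n * v ^ n))"
  proof (rule suminf_le)
    show "summable (\<lambda>n. (if n \<in> {..<N} then c n * \<bar>r n\<bar> else 0) + \<epsilon> * (c n * v ^ n))"
      using head summable by (intro summable_add summable_mult) (auto simp: sums_iff)
    show "\<bar>c n * r n * v ^ n\<bar> \<le>
        (if n \<in> {..<N} then c n * \<bar>r n\<bar> else 0) + \<epsilon> * (c n * v ^ n)" for n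
    proof (cases "n < N")
      case True
      have "\<bar>r n\<bar> * (c n * v ^ n) \<le> \<bar>r n\<bar> * (c n * 1)"
        using nonneg[of n] v by (intro mult_left_mono) (auto simp: power_le_one)
      moreover have "0 \<le> \<epsilon> * (c n * v ^ n)" using nonneg[of n] v \<open>0 \<le> \<epsilon>\<close> by simp
      ultimately show ?thesis unfolding abs_eq using True by (simp add: mult.commute)
    next
      case False
      then show ?thesis
        unfolding abs_eq using nonneg[of n] tail[of n] v by (simp add: mult_right_mono)
    qed
  qed (fact abs_summable)
  also have "\<dots> = (\<Sum>n<N. c n * \<bar>r n\<bar>) + \<epsilon> * (\<Sum>n. c n * v ^ n)"
    using head summable by (subst suminf_add[symmetric]) (auto simp: sums_iff suminf_mult)
  finally show ?thesis .
qed

lemma powser_weighted_mean_tendsto_0: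
  fixes c r :: "nat \<Rightarrow> real"
  assumes nonneg: "\<And>n. 0 \<le> c n" and r: "r \<longlonglongrightarrow> 0"
    and summable: "\<And>v. 0 \<le> v \<Longrightarrow> v < 1 \<Longrightarrow> summable (\<lambda>n. c n * v ^ n)"
    and unbounded: "filterlim (\<lambda>v. \<Sum>n. c n * v ^ n) at_top (at_left 1)"
  shows "((\<lambda>v. (\<Sum>n. c n * r n * v ^ n) / (\<Sum>n. c n * v ^ n)) \<longlongrightarrow> 0) (at_left 1)"
proof (rule tendstoI)
  fix e :: real assume "0 < e"
  obtain B where B: "\<And>n. \<bar>r n\<bar> \<le> B"
    using convergent_imp_Bseq[OF convergentI[OF r]] by (metis BseqE real_norm_def)
  obtain N where N: "\<And>n. N \<le> n \<Longrightarrow> \<bar>r n\<bar> \<le> e / 2"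
  proof -
    have "\<exists>N. \<forall>n\<ge>N. norm (r n - 0) < e / 2" using LIMSEQ_D[OF r, of "e / 2"] \<open>0 < e\<close> by simp
    then show ?thesis using that by (fastforce intro: less_imp_le)
  qed
  define M where "M = (\<Sum>n<N. c n * \<bar>r n\<bar>)"
  have "0 \<le> M" unfolding M_def using nonneg by (intro sum_nonneg) simp
  have "\<forall>\<^sub>F v in at_left 1. 2 * (M + 1) / e \<le> (\<Sum>n. c n * v ^ n)"
    using unbounded by (simp add: filterlim_at_top)
  moreover have "\<forall>\<^sub>F v in at_left (1::real). v \<in> {0<..<1}"
    by (rule eventually_at_left_real) simp
  ultimately show "\<forall>\<^sub>F v in at_left 1.
      dist ((\<Sum>n. c n * r n * v ^ n) / (\<Sum>n. c n * v ^ n)) 0 < e"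
  proof eventually_elim
    case (elim v)
    define C where "C = (\<Sum>n. c n * v ^ n)"
    have "M + 1 \<le> e / 2 * C" using elim \<open>0 < e\<close> unfolding C_def by (simp add: field_simps)
    then have "0 < e / 2 * C" using \<open>0 \<le> M\<close> by linarith
    then have "0 < C" using \<open>0 < e\<close> by (simp add: zero_less_mult_iff)
    have "\<bar>\<Sum>n. c n * r n * v ^ n\<bar> \<le> M + e / 2 * C"
      unfolding M_def C_def using elim summable[of v]
      by (intro abs_powser_weighted_le[OF nonneg B N]) auto
    also have "\<dots> < e * C" using \<open>M + 1 \<le> e / 2 * C\<close> by simp
    finally show ?case using \<open>0 < C\<close> unfolding C_def[symmetric] dist_real_def
      by (simp add: abs_divide pos_divide_less_eq)
  qed
qed

lemma antitone_powers_cross_nonpos: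
  fixes r :: "nat \<Rightarrow> real"
  assumes antitone: "\<And>m n. m \<le> n \<Longrightarrow> r n \<le> r m" and "0 \<le> u" "u \<le> v"
  shows "(r m - r n) * (v ^ m * u ^ n - u ^ m * v ^ n) \<le> 0"
proof -
  have cross: "v ^ i * u ^ j \<le> u ^ i * v ^ j" if "i \<le> j" for i j
  proof -
    obtain k where j: "j = i + k" using \<open>i \<le> j\<close> le_Suc_ex by blast
    have "(u ^ i * v ^ i) * u ^ k \<le> (u ^ i * v ^ i) * v ^ k"
      using assms by (intro mult_left_mono power_mono) auto
    then show ?thesis unfolding j power_add by (simp add: ac_simps)
  qed
  show ?thesis
  proof (cases "m \<le> n")
    case True
    with antitone cross show ?thesis by (intro mult_nonneg_nonpos) auto
  next
    case False
    with antitone[of n m] cross[of n m] show ?thesis by (intro mult_nonpos_nonneg) (auto simp: ac_simps)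
  qed
qed

lemma sum_powser_weighted_cross_le:
  fixes r c :: "nat \<Rightarrow> real"
  assumes antitone: "\<And>m n. m \<le> n \<Longrightarrow> r n \<le> r m" and nonneg: "\<And>n. 0 \<le> c n"
    and "0 \<le> u" "u \<le> v"
  shows "(\<Sum>n<N. c n * r n * v ^ n) * (\<Sum>n<N. c n * u ^ n) \<le>
         (\<Sum>n<N. c n * r n * u ^ n) * (\<Sum>n<N. c n * v ^ n)"
proof -
  define g where "g m n = c m * c n * r m * (v ^ m * u ^ n - u ^ m * v ^ n)" for m n
  have "(\<Sum>n<N. c n * r n * v ^ n) * (\<Sum>n<N. c n * u ^ n) -
        (\<Sum>n<N. c n * r n * u ^ n) * (\<Sum>n<N. c n * v ^ n) = (\<Sum>m<N. \<Sum>n<N. g m n)"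
    unfolding g_def sum_product sum_subtractf[symmetric]
    by (intro sum.cong refl) (simp add: algebra_simps)
  moreover have "2 * (\<Sum>m<N. \<Sum>n<N. g m n) = (\<Sum>m<N. \<Sum>n<N. g m n + g n m)"
    using sum.swap[of g "{..<N}" "{..<N}"] by (simp add: sum.distrib)
  moreover have "g m n + g n m \<le> 0" for m n
  proof -
    have "g m n + g n m = (c m * c n) * ((r m - r n) * (v ^ m * u ^ n - u ^ m * v ^ n))"
      unfolding g_def by (simp add: algebra_simps)
    also have "\<dots> \<le> 0"
      using nonneg[of m] nonneg[of n] antitone_powers_cross_nonpos[where r=r, OF antitone assms(3,4)]
      by (simp add: mult_nonneg_nonpos)
    finally show ?thesis .
  qed
  then have "(\<Sum>m<N. \<Sum>n<N. g m n + g n m) \<le> 0" by (intro sum_nonpos)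
  ultimately show ?thesis by linarith
qed

text \<open>Biernacki--Krzyz: for decreasing weights r the quotient
  (\<Sum>n. c n * r n * v ^ n) / (\<Sum>n. c n * v ^ n) decreases in v.\<close>
lemma powser_weighted_cross_le:
  fixes r c :: "nat \<Rightarrow> real"
  assumes antitone: "\<And>m n. m \<le> n \<Longrightarrow> r n \<le> r m" and nonneg: "\<And>n. 0 \<le> c n"
    and "0 \<le> u" "u \<le> v"
    and "summable (\<lambda>n. c n * r n * v ^ n)" "summable (\<lambda>n. c n * u ^ n)"
    and "summable (\<lambda>n. c n * r n * u ^ n)" "summable (\<lambda>n. c n * v ^ n)"
  shows "(\<Sum>n. c n * r n * v ^ n) * (\<Sum>n. c n * u ^ n) \<le>
         (\<Sum>n. c n * r n * u ^ n) * (\<Sum>n. c n * v ^ n)"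
proof (rule LIMSEQ_le)
  show "(\<lambda>N. (\<Sum>n<N. c n * r n * v ^ n) * (\<Sum>n<N. c n * u ^ n)) \<longlonglongrightarrow>
          (\<Sum>n. c n * r n * v ^ n) * (\<Sum>n. c n * u ^ n)"
    "(\<lambda>N. (\<Sum>n<N. c n * r n * u ^ n) * (\<Sum>n<N. c n * v ^ n)) \<longlonglongrightarrow>
          (\<Sum>n. c n * r n * u ^ n) * (\<Sum>n. c n * v ^ n)"
    using assms(5-8) by (auto intro!: tendsto_mult simp: summable_LIMSEQ)
  show "\<exists>N. \<forall>n\<ge>N. (\<Sum>n<n. c n * r n * v ^ n) * (\<Sum>n<n. c n * u ^ n) \<le>
                    (\<Sum>n<n. c n * r n * u ^ n) * (\<Sum>n<n. c n * v ^ n)"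
    using sum_powser_weighted_cross_le[where r=r and c=c, OF antitone nonneg assms(3,4)] by blast
qed

lemma pochhammer_binomial_sums:
  fixes b v :: real
  assumes "\<bar>v\<bar> < 1"
  shows "(\<lambda>n. pochhammer b n / fact n * v ^ n) sums (1 - v) powr (- b)"
proof -
  have "((- b) gchoose n) * (- v) ^ n = pochhammer b n / fact n * v ^ n" for n
  proof -
    have "((- b) gchoose n) * (- v) ^ n =
          ((- 1) * (- 1)) ^ n * (pochhammer b n / fact n * v ^ n)"
      unfolding gbinomial_pochhammer power_minus[of v] power_mult_distrib by simp
    then show ?thesis by simp
  qed
  with gen_binomial_real[of "- v" "- b"] assms show ?thesis by simp
qed

lemma continuous_attains_inf_of_tendsto_at_left:
  fixes f :: "real \<Rightarrow> real"
  assumes cont: "continuous_on {a..<b} f" and lim: "(f \<longlongrightarrow> L) (at_left b)"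
    and w: "w \<in> {a..<b}" "f w < L"
  shows "\<exists>x\<in>{a..<b}. \<forall>y\<in>{a..<b}. f x \<le> f y"
proof -
  have "\<forall>\<^sub>F y in at_left b. f w < f y" using lim w by (intro order_tendstoD)
  then obtain t where t: "t < b" "\<And>y. t < y \<Longrightarrow> y < b \<Longrightarrow> f w < f y"
    unfolding eventually_at_left_field by auto
  define s where "s = max t w"
  have s: "w \<le> s" "s < b" "t \<le> s" using t w by (auto simp: s_def)
  then have "continuous_on {a..s} f" by (auto intro: continuous_on_subset[OF cont])
  then obtain x where x: "x \<in> {a..s}" "\<And>y. y \<in> {a..s} \<Longrightarrow> f x \<le> f y"
    using continuous_attains_inf[of "{a..s}" f] s w by auto
  have "f x \<le> f y" if "y \<in> {a..<b}" for y
  proof (cases "y \<le> s")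
    case False
    with t s that have "f w < f y" by auto
    moreover have "f x \<le> f w" using x w s by auto
    ultimately show ?thesis by simp
  qed (use x that in auto)
  with x s show ?thesis by (intro bexI[of _ x]) auto
qed

locale hyp2F1_ratio =
  fixes b \<beta> \<gamma> :: real
  assumes beta_pos: "0 < \<beta>" and b_plus_1_pos: "0 < b + 1" and gamma_pos: "0 < \<gamma>"
begin

abbreviation coeff :: "nat \<Rightarrow> real" where
  "coeff \<equiv> hyp2F1_coeff (b + 1) \<beta> \<gamma>"

abbreviation weight :: "nat \<Rightarrow> real" where
  "weight \<equiv> pochhammer_quot b (b + 1)"

abbreviation ratio :: "real \<Rightarrow> real" where
  "ratio v \<equiv> hyp2F1 b \<beta> \<gamma> v / hyp2F1 (b + 1) \<beta> \<gamma> v"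

lemma coeff_pos: "0 < coeff n"
  using beta_pos b_plus_1_pos gamma_pos by (simp add: hyp2F1_coeff_pos)

lemma weight_eq: "weight n = (if n = 0 then 1 else b / (b + n))"
  using b_plus_1_pos by (rule pochhammer_quot_succ)

lemma weight_tendsto_0: "weight \<longlonglongrightarrow> 0"
proof -
  have "(\<lambda>n. b / (b + real n)) \<longlonglongrightarrow> 0"
    by (intro real_tendsto_divide_at_top[OF tendsto_const]
        filterlim_tendsto_add_at_top[OF tendsto_const filterlim_real_sequentially])
  moreover have "\<forall>\<^sub>F n in sequentially. b / (b + real n) = weight n"
    using eventually_gt_at_top[of "0::nat"] by eventually_elim (simp add: weight_eq)
  ultimately show ?thesis by (simp add: tendsto_cong)
qed

lemma summable_coeff: "\<bar>v\<bar> < 1 \<Longrightarrow> summable (\<lambda>n. coeff n * v ^ n)"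
  using beta_pos b_plus_1_pos gamma_pos by (intro summable_hyp2F1_powser) auto

lemma summable_weighted: "\<bar>v\<bar> < 1 \<Longrightarrow> summable (\<lambda>n. coeff n * weight n * v ^ n)"
proof -
  assume "\<bar>v\<bar> < 1"
  obtain B where B: "\<And>n. \<bar>weight n\<bar> \<le> B"
    using convergent_imp_Bseq[OF convergentI[OF weight_tendsto_0]] by (metis BseqE real_norm_def)
  show ?thesis
  proof (rule summable_comparison_test')
    show "summable (\<lambda>n. B * (coeff n * \<bar>v\<bar> ^ n))"
      using summable_coeff[of "\<bar>v\<bar>"] \<open>\<bar>v\<bar> < 1\<close> by (intro summable_mult) simp
    show "norm (coeff n * weight n * v ^ n) \<le> B * (coeff n * \<bar>v\<bar> ^ n)" for n
    proof -
      have "norm (coeff n * weight n * v ^ n) = \<bar>weight n\<bar> * (coeff n * \<bar>v\<bar> ^ n)"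
        using coeff_pos[of n] by (simp add: abs_mult power_abs)
      also have "\<dots> \<le> B * (coeff n * \<bar>v\<bar> ^ n)"
        using B[of n] coeff_pos[of n] by (intro mult_right_mono) auto
      finally show ?thesis .
    qed
  qed
qed

lemma hyp2F1_lower_eq: "hyp2F1 b \<beta> \<gamma> v = (\<Sum>n. coeff n * weight n * v ^ n)"
  using beta_pos b_plus_1_pos gamma_pos by (simp add: hyp2F1_powser hyp2F1_coeff_lower[of b])

lemma summable_hyp2F1_lower: "\<bar>v\<bar> < 1 \<Longrightarrow> summable (\<lambda>n. hyp2F1_coeff b \<beta> \<gamma> n * v ^ n)"
  using summable_weighted beta_pos b_plus_1_pos gamma_pos by (simp add: hyp2F1_coeff_lower[of b])

lemma hyp2F1_upper_ge_1:
  assumes "0 \<le> v" "v < 1"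
  shows "1 \<le> hyp2F1 (b + 1) \<beta> \<gamma> v"
proof -
  have "(\<Sum>n<1. coeff n * v ^ n) \<le> (\<Sum>n. coeff n * v ^ n)"
    using summable_coeff[of v] assms coeff_pos[THEN less_imp_le] by (intro sum_le_suminf) auto
  then show ?thesis by (simp add: hyp2F1_powser)
qed

lemma hyp2F1_upper_mono:
  assumes "0 \<le> u" "u \<le> v" "v < 1"
  shows "hyp2F1 (b + 1) \<beta> \<gamma> u \<le> hyp2F1 (b + 1) \<beta> \<gamma> v"
  unfolding hyp2F1_powser
  using assms summable_coeff[of u] summable_coeff[of v] coeff_pos
  by (intro suminf_le mult_left_mono power_mono) (auto intro: less_imp_le)

lemma ratio_tendsto_0:
  assumes "\<gamma> < b + 1 + \<beta>"
  shows "(ratio \<longlongrightarrow> 0) (at_left 1)"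
proof -
  have "\<not> summable coeff"
    using assms beta_pos b_plus_1_pos gamma_pos by (intro not_summable_hyp2F1_coeff) auto
  then have "filterlim (\<lambda>v. \<Sum>n. coeff n * v ^ n) at_top (at_left 1)"
    using coeff_pos summable_coeff by (intro powser_tendsto_at_top_at_left_1) (auto intro: less_imp_le)
  then show ?thesis
    unfolding hyp2F1_lower_eq hyp2F1_powser[of "b + 1"]
    using coeff_pos summable_coeff weight_tendsto_0
    by (intro powser_weighted_mean_tendsto_0) (auto intro: less_imp_le)
qed

lemma weight_antimono:
  assumes "0 \<le> b" "m \<le> n"
  shows "weight n \<le> weight m"
proof (cases "m = 0")
  case True
  with assms show ?thesis by (simp add: weight_eq divide_le_eq_1)
next
  case False
  with assms have "b / (b + n) \<le> b / (b + m)" by (intro divide_left_mono) auto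
  with False assms show ?thesis by (simp add: weight_eq)
qed

lemma ratio_antimono_of_nonneg:
  assumes "0 \<le> b" "0 \<le> u" "u \<le> v" "v < 1"
  shows "ratio v \<le> ratio u"
proof -
  have "hyp2F1 b \<beta> \<gamma> v * hyp2F1 (b + 1) \<beta> \<gamma> u \<le> hyp2F1 b \<beta> \<gamma> u * hyp2F1 (b + 1) \<beta> \<gamma> v"
    unfolding hyp2F1_lower_eq hyp2F1_powser[of "b + 1"]
    using assms summable_coeff summable_weighted coeff_pos weight_antimono
    by (intro powser_weighted_cross_le) (auto intro: less_imp_le)
  moreover have "1 \<le> hyp2F1 (b + 1) \<beta> \<gamma> u" "1 \<le> hyp2F1 (b + 1) \<beta> \<gamma> v"
    using assms by (auto intro: hyp2F1_upper_ge_1)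
  ultimately show ?thesis by (simp add: divide_le_eq le_divide_eq mult.commute)
qed

lemma binomial_term_nonpos:
  assumes "b \<le> 0" "1 \<le> n" "0 \<le> v"
  shows "pochhammer b n / fact n * v ^ n \<le> 0"
  using pochhammer_nonpos[OF b_plus_1_pos assms(1,2)] assms(3)
  by (intro mult_nonpos_nonneg divide_nonpos_pos) auto

lemma hyp2F1_coeff_lower_nonpos:
  assumes "b \<le> 0" "1 \<le> n"
  shows "hyp2F1_coeff b \<beta> \<gamma> n \<le> 0"
  using pochhammer_nonpos[OF b_plus_1_pos assms] pochhammer_quot_nonneg[of \<beta> \<gamma> n] beta_pos gamma_pos
  unfolding hyp2F1_coeff_eq_binomial_quot by (intro mult_nonpos_nonneg divide_nonpos_pos) auto

lemma hyp2F1_lower_ge_binomial: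
  assumes "b \<le> 0" "\<beta> \<le> \<gamma>" "0 \<le> v" "v < 1"
  shows "(1 - v) powr (- b) \<le> hyp2F1 b \<beta> \<gamma> v"
  unfolding hyp2F1_powser
proof (rule sums_le[OF _ pochhammer_binomial_sums summable_sums])
  show "\<bar>v\<bar> < 1" "summable (\<lambda>n. hyp2F1_coeff b \<beta> \<gamma> n * v ^ n)"
    using assms summable_hyp2F1_lower by auto
  show "pochhammer b n / fact n * v ^ n \<le> hyp2F1_coeff b \<beta> \<gamma> n * v ^ n" for n
  proof (cases "n = 0")
    case False
    have "pochhammer b n / fact n * v ^ n * 1 \<le> pochhammer b n / fact n * v ^ n * pochhammer_quot \<beta> \<gamma> n"
      using False assms beta_pos binomial_term_nonpos pochhammer_quot_le_1
      by (intro mult_left_mono_neg) auto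
    then show ?thesis by (simp add: hyp2F1_coeff_eq_binomial_quot ac_simps)
  qed simp
qed

lemma hyp2F1_lower_antimono:
  assumes "b \<le> 0" "0 \<le> u" "u \<le> v" "v < 1"
  shows "hyp2F1 b \<beta> \<gamma> v \<le> hyp2F1 b \<beta> \<gamma> u"
  unfolding hyp2F1_powser
proof (rule suminf_le)
  show "summable (\<lambda>n. hyp2F1_coeff b \<beta> \<gamma> n * v ^ n)" "summable (\<lambda>n. hyp2F1_coeff b \<beta> \<gamma> n * u ^ n)"
    using assms summable_hyp2F1_lower by auto
  show "hyp2F1_coeff b \<beta> \<gamma> n * v ^ n \<le> hyp2F1_coeff b \<beta> \<gamma> n * u ^ n" for n
    using assms hyp2F1_coeff_lower_nonpos[of n]
    by (cases "n = 0") (auto intro: mult_left_mono_neg power_mono)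
qed

lemma ratio_antimono_of_nonpos:
  assumes "b \<le> 0" "\<beta> \<le> \<gamma>" "0 \<le> u" "u \<le> v" "v < 1"
  shows "ratio v \<le> ratio u"
proof -
  have "0 \<le> hyp2F1 b \<beta> \<gamma> u"
    using hyp2F1_lower_ge_binomial[of u] assms by (smt (verit) powr_ge_zero)
  have "0 < hyp2F1 (b + 1) \<beta> \<gamma> u"
    using hyp2F1_upper_ge_1[of u] assms by simp
  have "ratio v \<le> hyp2F1 b \<beta> \<gamma> u / hyp2F1 (b + 1) \<beta> \<gamma> v"
    using hyp2F1_lower_antimono hyp2F1_upper_ge_1[of v] assms
    by (intro divide_right_mono) auto
  also have "\<dots> \<le> hyp2F1 b \<beta> \<gamma> u / hyp2F1 (b + 1) \<beta> \<gamma> u"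
    using \<open>0 \<le> hyp2F1 b \<beta> \<gamma> u\<close> \<open>0 < hyp2F1 (b + 1) \<beta> \<gamma> u\<close> hyp2F1_upper_mono
      hyp2F1_upper_ge_1[of v] assms
    by (intro divide_left_mono) auto
  finally show ?thesis .
qed

lemma ratio_ge:
  assumes "b \<le> 0" "0 \<le> v" "v < 1"
  shows "b / (b + 1) \<le> ratio v"
proof -
  have weight_ge: "b / (b + 1) \<le> weight n" for n
  proof (cases "n = 0")
    case True
    with assms b_plus_1_pos show ?thesis by (simp add: weight_eq divide_nonpos_pos)
  next
    case False
    with assms b_plus_1_pos have "b / (b + 1) \<le> b / (b + n)" by (intro divide_left_mono_neg) auto
    with False show ?thesis by (simp add: weight_eq)
  qed
  have "b / (b + 1) * hyp2F1 (b + 1) \<beta> \<gamma> v = (\<Sum>n. b / (b + 1) * (coeff n * v ^ n))"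
    unfolding hyp2F1_powser using summable_coeff assms by (intro suminf_mult[symmetric]) auto
  also have "\<dots> \<le> hyp2F1 b \<beta> \<gamma> v"
    unfolding hyp2F1_lower_eq
  proof (rule suminf_le)
    show "summable (\<lambda>n. b / (b + 1) * (coeff n * v ^ n))" "summable (\<lambda>n. coeff n * weight n * v ^ n)"
      using assms summable_coeff summable_weighted by (auto intro: summable_mult)
    show "b / (b + 1) * (coeff n * v ^ n) \<le> coeff n * weight n * v ^ n" for n
    proof -
      have "b / (b + 1) * (coeff n * v ^ n) \<le> weight n * (coeff n * v ^ n)"
        using weight_ge[of n] coeff_pos[of n] assms by (intro mult_right_mono) auto
      then show ?thesis by (simp only: ac_simps)
    qed
  qed
  finally have "b / (b + 1) * hyp2F1 (b + 1) \<beta> \<gamma> v \<le> hyp2F1 b \<beta> \<gamma> v" .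
  moreover have "0 < hyp2F1 (b + 1) \<beta> \<gamma> v" using hyp2F1_upper_ge_1 assms by fastforce
  ultimately show ?thesis by (simp only: pos_le_divide_eq)
qed

lemma hyp2F1_lower_le_binomial:
  assumes "b \<le> 0" "\<gamma> \<le> \<beta>" "0 \<le> v" "v < 1"
  shows "hyp2F1 b \<beta> \<gamma> v \<le> \<beta> / \<gamma> * (1 - v) powr (- b) + (1 - \<beta> / \<gamma>)"
proof -
  have upper: "(\<lambda>n. \<beta> / \<gamma> * (pochhammer b n / fact n * v ^ n) + (if n = 0 then 1 - \<beta> / \<gamma> else 0))
          sums (\<beta> / \<gamma> * (1 - v) powr (- b) + (1 - \<beta> / \<gamma>))"
    using assms by (intro sums_add sums_mult pochhammer_binomial_sums sums_single) auto
  have lower: "(\<lambda>n. hyp2F1_coeff b \<beta> \<gamma> n * v ^ n) sums hyp2F1 b \<beta> \<gamma> v"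
    unfolding hyp2F1_powser using assms summable_hyp2F1_lower by (intro summable_sums) auto
  have termwise: "hyp2F1_coeff b \<beta> \<gamma> n * v ^ n \<le>
      \<beta> / \<gamma> * (pochhammer b n / fact n * v ^ n) + (if n = 0 then 1 - \<beta> / \<gamma> else 0)" for n
  proof (cases "n = 0")
    case False
    have "pochhammer b n / fact n * v ^ n * pochhammer_quot \<beta> \<gamma> n \<le> pochhammer b n / fact n * v ^ n * (\<beta> / \<gamma>)"
      using False assms gamma_pos binomial_term_nonpos pochhammer_quot_ge
      by (intro mult_left_mono_neg) auto
    with False show ?thesis by (simp add: hyp2F1_coeff_eq_binomial_quot ac_simps)
  qed simp
  show ?thesis by (rule sums_le[OF termwise lower upper])
qed

lemma ratio_eventually_neg:
  assumes "b < 0" "\<gamma> < \<beta>"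
  shows "\<forall>\<^sub>F v in at_left 1. ratio v < 0"
proof -
  have in_01: "\<forall>\<^sub>F v in at_left (1::real). v \<in> {0<..<1}"
    by (rule eventually_at_left_real) simp
  have "((\<lambda>v. 1 - v) \<longlongrightarrow> 0) (at_left (1::real))"
    by (rule tendsto_eq_intros | simp)+
  moreover have "\<forall>\<^sub>F v in at_left (1::real). 0 \<le> 1 - v"
    using in_01 by eventually_elim simp
  ultimately have "((\<lambda>v. \<beta> / \<gamma> * (1 - v) powr (- b) + (1 - \<beta> / \<gamma>)) \<longlongrightarrow> \<beta> / \<gamma> * 0 + (1 - \<beta> / \<gamma>))
      (at_left 1)"
    using assms by (intro tendsto_intros tendsto_zero_powrI) auto
  moreover have "\<beta> / \<gamma> * 0 + (1 - \<beta> / \<gamma>) < 0" using assms gamma_pos by simp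
  ultimately have "\<forall>\<^sub>F v in at_left 1. \<beta> / \<gamma> * (1 - v) powr (- b) + (1 - \<beta> / \<gamma>) < 0"
    by (intro order_tendstoD)
  with in_01 show ?thesis
  proof eventually_elim
    case (elim v)
    with assms hyp2F1_lower_le_binomial[of v] have "hyp2F1 b \<beta> \<gamma> v < 0" by auto
    with elim hyp2F1_upper_ge_1[of v] show ?case by (simp add: divide_neg_pos)
  qed
qed

lemma continuous_on_ratio:
  "continuous_on {0..<1} ratio"
proof (intro continuous_at_imp_continuous_on ballI)
  fix x :: real assume x: "x \<in> {0..<1}"
  define R where "R = (1 + x) / 2"
  have R: "\<bar>R\<bar> < 1" "norm x < norm R" using x by (auto simp: R_def)
  have "isCont (\<lambda>v. \<Sum>n. coeff n * weight n * v ^ n) x" "isCont (\<lambda>v. \<Sum>n. coeff n * v ^ n) x"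
    using summable_weighted[OF R(1)] summable_coeff[OF R(1)] R(2)
    by (auto intro!: isCont_powser[of _ R])
  then show "isCont ratio x"
    unfolding hyp2F1_lower_eq hyp2F1_powser[of "b + 1"]
    using hyp2F1_upper_ge_1[of x] x by (intro isCont_divide) (auto simp: hyp2F1_powser)
qed

lemma ratio_antimono:
  assumes "0 \<le> b \<or> \<beta> \<le> \<gamma>" "0 \<le> u" "u \<le> v" "v < 1"
  shows "ratio v \<le> ratio u"
  using assms ratio_antimono_of_nonneg ratio_antimono_of_nonpos by fastforce

lemma ratio_attains_negative_min:
  assumes "b < 0" "\<gamma> < \<beta>" "\<gamma> < b + 1 + \<beta>"
  shows "\<exists>v0\<in>{0..<1}. ratio v0 < 0 \<and> (\<forall>v\<in>{0..<1}. ratio v0 \<le> ratio v)"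
proof -
  have "\<forall>\<^sub>F v in at_left (1::real). v \<in> {0<..<1}"
    by (rule eventually_at_left_real) simp
  with ratio_eventually_neg[OF assms(1,2)] have "\<forall>\<^sub>F v in at_left 1. v \<in> {0<..<1} \<and> ratio v < 0"
    by eventually_elim auto
  then have "\<exists>w. w \<in> {0<..<1} \<and> ratio w < 0"
    by (rule eventually_happens'[OF trivial_limit_at_left_real])
  then obtain w where w: "w \<in> {0..<1}" "ratio w < 0" by (auto intro: less_imp_le)
  then obtain v0 where "v0 \<in> {0..<1}" "\<forall>v\<in>{0..<1}. ratio v0 \<le> ratio v"
    using continuous_attains_inf_of_tendsto_at_left[OF continuous_on_ratio ratio_tendsto_0[OF assms(3)]]
    by metis
  with w show ?thesis by (meson le_less_trans)
qed

end

theorem lemma3p4: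
  fixes b \<beta> \<gamma> :: real and K :: "real \<Rightarrow> real"
  assumes "\<beta> > 0" and "0 < b + 1" and "b + 1 < \<gamma>" and "\<gamma> < b + 1 + \<beta>"
    and K_def: "\<And>v. K v = hyp2F1 b \<beta> \<gamma> v / hyp2F1 (b + 1) \<beta> \<gamma> v"
  shows "K 0 = 1
    \<and> (K \<longlongrightarrow> 0) (at_left 1)
    \<and> ((b \<ge> 0 \<or> (-1 < b \<and> b < 0 \<and> \<gamma> \<ge> \<beta>)) \<longrightarrow>
           (\<forall>u\<in>{0..<1}. \<forall>v\<in>{0..<1}. u \<le> v \<longrightarrow> K v \<le> K u))
    \<and> ((-1 < b \<and> b < 0 \<and> \<gamma> < \<beta>) \<longrightarrow>
           (\<exists>v0\<in>{0..<1}. K v0 < 0 \<and> (\<forall>v\<in>{0..<1}. K v0 \<le> K v))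
           \<and> (\<forall>\<^sub>F v in at_left 1. K v < 0) \<and> (K \<longlongrightarrow> 0) (at_left 1)
           \<and> (INF v\<in>{0..<1}. K v) \<ge> b / (b + 1))"
proof -
  interpret hyp2F1_ratio b \<beta> \<gamma> using assms by unfold_locales auto
  have K_eq: "K = ratio" using K_def by (intro ext)
  have "K 0 = 1" by (simp add: K_eq)
  moreover have "(K \<longlongrightarrow> 0) (at_left 1)" unfolding K_eq using assms(4) by (rule ratio_tendsto_0)
  moreover have "(b \<ge> 0 \<or> (-1 < b \<and> b < 0 \<and> \<gamma> \<ge> \<beta>)) \<longrightarrow>
      (\<forall>u\<in>{0..<1}. \<forall>v\<in>{0..<1}. u \<le> v \<longrightarrow> K v \<le> K u)"
    unfolding K_eq using ratio_antimono by auto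
  moreover have "b / (b + 1) \<le> (INF v\<in>{0..<1}. K v)" if "b < 0"
    unfolding K_eq using that ratio_ge by (intro cINF_greatest) auto
  ultimately show ?thesis
    using ratio_attains_negative_min ratio_eventually_neg assms(4) unfolding K_eq by blast
qed

end
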